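(* Let $q\in(0,1]$. Then $\mathrm{Kaz}(\rho,R(SO_q(3)))=1-\frac{3}{[3]_q}=1-\frac{3}{q^2+q^{-2}+1}$.
   Context: $R(SO_q(3))$ is the fusion algebra with irreducible objects $I=\mathbb{Z}_+$, unit $0$, trivial involution, product $m\cdot n=\sum_{k=|m-n|}^{m+n}k=\sum_kN^k_{m,n}k$, and dimension $d(n)=[2n+1]_q$, where $[x]_q=\frac{q^{-x}-q^x}{q^{-1}-q}$ for $0<q<1$ and $[x]_1=x$. Let $\mathcal{C}_R=\mathbb{C}[I]$ be the complexification; the right regular representation $\rho:\mathcal{C}_R\to B(\ell^2(I))$ is $\rho(m)\delta_n=\sum_kN^k_{n,\bar m}\delta_k$. A finite generating set is a finite $X\subseteq I$ such that every element of $I$ appears with nonzero coefficient in some product of elements of $X$. For a unital $*$-representation $\pi$ and finite generating $X$, $\mathrm{Kaz}(X,\pi,R)=\inf_{\|\xi\|=1}\max_{m\in X}\frac{\|\pi(m)\xi-d(m)\xi\|}{d(m)}$ and $\mathrm{Kaz}(\pi,R)=\inf_X\mathrm{Kaz}(X,\pi,R)$ over finite generating sets. *)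

theory Defs
  imports "HOL-Analysis.Analysis"
begin

text \<open>The fusion algebra R(SO_q(3)): irreducibles are the naturals, unit 0,
  trivial involution, fusion rules N^k_{m,n} = 1 iff |m-n| <= k <= m+n.\<close>

definition fusion_N :: "nat \<Rightarrow> nat \<Rightarrow> nat \<Rightarrow> nat" where
  "fusion_N k m n = (if nat \<bar>int m - int n\<bar> \<le> k \<and> k \<le> m + n then 1 else 0)"

definition qnum :: "real \<Rightarrow> real \<Rightarrow> real" where
  "qnum q x = (if q = 1 then x else (q powr (-x) - q powr x) / (inverse q - q))"

definition dimq :: "real \<Rightarrow> nat \<Rightarrow> real" where
  "dimq q n = qnum q (2 * real n + 1)"

text \<open>Coefficient of the irreducible k in the product m_1 \<cdot> ... \<cdot> m_r
  of the word [m_1,...,m_r] (empty product = unit 0).\<close>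
fun word_coeff :: "nat list \<Rightarrow> nat \<Rightarrow> nat" where
  "word_coeff [] k = (if k = 0 then 1 else 0)"
| "word_coeff (m # w) k = (\<Sum>j\<le>k + m. fusion_N k m j * word_coeff w j)"

definition finite_generating :: "nat set \<Rightarrow> bool" where
  "finite_generating X \<longleftrightarrow> finite X \<and>
     (\<forall>k. \<exists>w. set w \<subseteq> X \<and> word_coeff w k \<noteq> 0)"

definition l2 :: "(nat \<Rightarrow> complex) set" where
  "l2 = {\<xi>. summable (\<lambda>n. (cmod (\<xi> n))\<^sup>2)}"

definition l2norm :: "(nat \<Rightarrow> complex) \<Rightarrow> real" where
  "l2norm \<xi> = sqrt (\<Sum>n. (cmod (\<xi> n))\<^sup>2)"

text \<open>Right regular representation: rho(m) delta_n = sum_k N^k_{n, bar m} delta_k,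
  with bar m = m. Hence (rho(m) xi)(k) = sum_n N^k_{n,m} xi(n); only n <= k+m contribute.\<close>
definition rho :: "nat \<Rightarrow> (nat \<Rightarrow> complex) \<Rightarrow> (nat \<Rightarrow> complex)" where
  "rho m \<xi> = (\<lambda>k. \<Sum>n\<le>k + m. of_nat (fusion_N k n m) * \<xi> n)"

definition Kaz_X :: "real \<Rightarrow> nat set \<Rightarrow> real" where
  "Kaz_X q X = (INF \<xi>\<in>{\<xi>\<in>l2. l2norm \<xi> = 1}.
      Max ((\<lambda>m. l2norm (\<lambda>k. rho m \<xi> k - of_real (dimq q m) * \<xi> k) / dimq q m) ` X))"

definition Kaz_rho :: "real \<Rightarrow> real" where
  "Kaz_rho q = (INF X\<in>{X. finite_generating X}. Kaz_X q X)"

end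

theory Submission
  imports Defs
begin

text \<open>Every finite generating set contains some \<open>m \<ge> 1\<close>, since words in \<open>0\<close> alone
  only produce \<open>0\<close>. The matrix of \<open>\<rho>(m)\<close> has entries in \<open>{0, 1}\<close> with at most \<open>2m+1\<close>
  nonzero entries in each row and column, so the Schur test gives \<open>\<parallel>\<rho>(m)\<parallel> \<le> 2m+1\<close> and,
  for unit \<open>\<xi>\<close>, \<open>\<parallel>\<rho>(m)\<xi> - d(m)\<xi>\<parallel> / d(m) \<ge> 1 - (2m+1)/d(m) \<ge> 1 - 3/d(1)\<close>; the last
  step uses \<open>d(m) \<ge> 1 + m(q\<^sup>2 + q\<^sup>-\<^sup>2)\<close>. Conversely \<open>{1}\<close> generates, and the normalised
  indicator \<open>\<xi>\<^sub>N\<close> of \<open>{0, \<dots>, N-1}\<close> satisfies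
  \<open>\<parallel>\<rho>(1)\<xi>\<^sub>N - d(1)\<xi>\<^sub>N\<parallel>\<^sup>2 = (d(1) - 3)\<^sup>2 + (6 d(1) - 12)/N\<close>,
  so the bound is attained in the limit \<open>N \<rightarrow> \<infinity>\<close>.\<close>

section \<open>Quantum dimensions\<close>

lemma dimq_eq_power:
  assumes "0 < q" "q \<noteq> 1"
  shows "dimq q n = (inverse q ^ (2*n+1) - q ^ (2*n+1)) / (inverse q - q)"
proof -
  have "2 * real n + 1 = real (2*n+1)" by simp
  then show ?thesis
    using assms unfolding dimq_def qnum_def
    by (simp only: if_False powr_minus powr_realpow power_inverse)
qed

lemma inverse_minus_self_neq_0:
  fixes q :: "'a::linordered_field"
  assumes "0 < q" "q \<noteq> 1"
  shows "inverse q - q \<noteq> 0"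
proof
  assume "inverse q - q = 0"
  then have "(q - 1) * (q + 1) = 0" using assms by (simp add: field_simps)
  then show False using assms by simp
qed

lemma dimq_0:
  assumes "0 < q"
  shows "dimq q 0 = 1"
proof (cases "q = 1")
  case True
  then show ?thesis by (simp add: dimq_def qnum_def)
next
  case False
  then show ?thesis
    using dimq_eq_power[OF assms False, of 0] inverse_minus_self_neq_0[OF assms False] by simp
qed

lemma dimq_Suc:
  assumes "0 < q"
  shows "dimq q (Suc n) = dimq q n + q ^ (2*n+2) + inverse q ^ (2*n+2)"
proof (cases "q = 1")
  case True
  then show ?thesis by (simp add: dimq_def qnum_def)
next
  case False
  define x where "x = inverse q"
  have xq: "x * q = 1" using assms by (simp add: x_def)
  have "x - q \<noteq> 0"
    using inverse_minus_self_neq_0[OF assms False] by (simp add: x_def)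
  have step: "x ^ (k+2) - q ^ (k+2) = (x ^ k - q ^ k) + (q ^ (k+1) + x ^ (k+1)) * (x - q)" for k
  proof -
    have "q ^ (k+1) * x = q ^ k * (x * q)" "x ^ (k+1) * q = x ^ k * (x * q)"
      by (simp_all add: algebra_simps)
    then have "q ^ (k+1) * x = q ^ k" "x ^ (k+1) * q = x ^ k"
      using xq by simp_all
    moreover have "x ^ (k+2) = x ^ (k+1) * x" "q ^ (k+2) = q ^ (k+1) * q"
      by simp_all
    moreover have "(q ^ (k+1) + x ^ (k+1)) * (x - q)
        = q ^ (k+1) * x + x ^ (k+1) * x - q ^ (k+1) * q - x ^ (k+1) * q"
      by (simp add: algebra_simps)
    ultimately show ?thesis by linarith
  qed
  have "2 * Suc n + 1 = (2*n+1) + 2" by simp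
  then have "dimq q (Suc n) = (x ^ ((2*n+1)+2) - q ^ ((2*n+1)+2)) / (x - q)"
    unfolding dimq_eq_power[OF assms False] x_def by presburger
  also have "\<dots> = (x ^ (2*n+1) - q ^ (2*n+1)) / (x - q) + (q ^ (2*n+2) + x ^ (2*n+2))"
    unfolding step using \<open>x - q \<noteq> 0\<close> by (simp add: add_divide_distrib)
  also have "(x ^ (2*n+1) - q ^ (2*n+1)) / (x - q) = dimq q n"
    unfolding dimq_eq_power[OF assms False] x_def ..
  finally show ?thesis
    by (simp add: x_def)
qed

lemma dimq_1: "0 < q \<Longrightarrow> dimq q 1 = q\<^sup>2 + inverse (q\<^sup>2) + 1"
  using dimq_Suc[of q 0] by (simp add: dimq_0 power2_eq_square)

lemma add_inverse_mono:
  fixes x y :: "'a::linordered_field"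
  assumes "1 \<le> x" "x \<le> y"
  shows "x + inverse x \<le> y + inverse y"
proof -
  have "y + inverse y - (x + inverse x) = (y - x) * (1 - inverse x * inverse y)"
    using assms by (simp add: field_simps)
  moreover have "inverse x * inverse y \<le> 1"
    using assms by (intro mult_le_one) (auto simp: inverse_le_1_iff)
  ultimately show ?thesis
    using assms by (metis diff_ge_0_iff_ge mult_nonneg_nonneg)
qed

lemma dimq_ge_linear:
  assumes "0 < q" "q \<le> 1"
  shows "1 + real m * (q\<^sup>2 + inverse (q\<^sup>2)) \<le> dimq q m"
proof (induction m)
  case 0
  then show ?case using assms by (simp add: dimq_0)
next
  case (Suc m)
  define u where "u = inverse (q\<^sup>2)"
  have "1 \<le> u"
    using assms by (simp add: u_def one_le_inverse power_le_one)
  moreover have "u \<le> u ^ Suc m"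
    using power_increasing[of 1 "Suc m" u] calculation by simp
  ultimately have "u + inverse u \<le> u ^ Suc m + inverse (u ^ Suc m)"
    by (rule add_inverse_mono)
  also have "u ^ Suc m = inverse q ^ (2*m+2)"
    unfolding u_def power_inverse power_mult[symmetric] by simp
  also have "inverse (inverse q ^ (2*m+2)) = q ^ (2*m+2)"
    by (simp add: power_inverse)
  finally have "q\<^sup>2 + inverse (q\<^sup>2) \<le> q ^ (2*m+2) + inverse q ^ (2*m+2)"
    by (simp add: u_def)
  then show ?case
    using Suc dimq_Suc[OF assms(1), of m] by (simp add: algebra_simps)
qed

lemma dimq_pos:
  assumes "0 < q" "q \<le> 1"
  shows "0 < dimq q m"
proof -
  have "0 \<le> real m * (q\<^sup>2 + inverse (q\<^sup>2))"
    by simp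
  then show ?thesis
    using dimq_ge_linear[OF assms, of m] by linarith
qed

lemma two_le_add_inverse:
  fixes x :: "'a::linordered_field"
  assumes "0 < x"
  shows "2 \<le> x + inverse x"
proof -
  have "x + inverse x - 2 = (x - 1)\<^sup>2 / x"
    using assms by (simp add: field_simps power2_eq_square)
  then show ?thesis
    using assms by (metis diff_ge_0_iff_ge divide_nonneg_pos zero_le_power2)
qed

lemma three_le_dimq_1:
  assumes "0 < q"
  shows "3 \<le> dimq q 1"
  using dimq_1[OF assms] two_le_add_inverse[of "q\<^sup>2"] assms by simp

lemma dimq_ratio_le:
  assumes "0 < q" "q \<le> 1" "1 \<le> m"
  shows "real (2*m+1) / dimq q m \<le> 3 / dimq q 1"
proof -
  define s where "s = q\<^sup>2 + inverse (q\<^sup>2)"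
  have "2 \<le> s"
    using two_le_add_inverse[of "q\<^sup>2"] assms by (simp add: s_def)
  have lin: "1 + real m * s \<le> dimq q m"
    using dimq_ge_linear[OF assms(1,2)] by (simp add: s_def)
  have "0 \<le> (real m - 1) * (s - 2)"
    using assms \<open>2 \<le> s\<close> by simp
  then have "real (2*m+1) * (1 + s) \<le> real (2*m+1) * (1 + s) + (real m - 1) * (s - 2)"
    by simp
  also have "\<dots> = 3 * (1 + real m * s)"
    by (simp add: algebra_simps)
  also have "\<dots> \<le> 3 * dimq q m"
    using lin by simp
  finally have "real (2*m+1) * (1 + s) \<le> 3 * dimq q m" .
  moreover have "0 < dimq q m" "0 < 1 + s"
    using lin \<open>2 \<le> s\<close> mult_nonneg_nonneg[of "real m" s] by linarith+
  moreover have "dimq q 1 = 1 + s"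
    using dimq_1[OF assms(1)] by (simp add: s_def)
  ultimately show ?thesis
    by (simp add: field_simps)
qed

section \<open>Square-summable sequences and the Schur test\<close>

lemma Schur_test_sum:
  fixes w :: "'a \<Rightarrow> 'b \<Rightarrow> real" and x :: "'b \<Rightarrow> real"
  assumes w_nonneg: "\<And>k n. 0 \<le> w k n"
    and rows: "\<And>k. k \<in> K \<Longrightarrow> (\<Sum>n\<in>N. w k n) \<le> s"
    and cols: "\<And>n. n \<in> N \<Longrightarrow> (\<Sum>k\<in>K. w k n) \<le> s"
  shows "(\<Sum>k\<in>K. (\<Sum>n\<in>N. w k n * x n)\<^sup>2) \<le> s\<^sup>2 * (\<Sum>n\<in>N. (x n)\<^sup>2)"
proof (cases "K = {}")
  case True
  then show ?thesis by (simp add: sum_nonneg)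
next
  case False
  then have "0 \<le> s"
    using rows w_nonneg by (meson all_not_in_conv order_trans sum_nonneg)
  have row: "(\<Sum>n\<in>N. w k n * x n)\<^sup>2 \<le> s * (\<Sum>n\<in>N. w k n * (x n)\<^sup>2)" if "k \<in> K" for k
  proof -
    have "(\<Sum>n\<in>N. w k n * x n)\<^sup>2 = (\<Sum>n\<in>N. sqrt (w k n) * (sqrt (w k n) * x n))\<^sup>2"
      using w_nonneg by (simp add: mult.assoc[symmetric])
    also have "\<dots> \<le> (\<Sum>n\<in>N. (sqrt (w k n))\<^sup>2) * (\<Sum>n\<in>N. (sqrt (w k n) * x n)\<^sup>2)"
      by (rule Cauchy_Schwarz_ineq_sum)
    also have "\<dots> = (\<Sum>n\<in>N. w k n) * (\<Sum>n\<in>N. w k n * (x n)\<^sup>2)"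
      using w_nonneg by (simp add: power_mult_distrib)
    also have "\<dots> \<le> s * (\<Sum>n\<in>N. w k n * (x n)\<^sup>2)"
      using rows[OF that] w_nonneg by (intro mult_right_mono sum_nonneg) auto
    finally show ?thesis .
  qed
  have "(\<Sum>k\<in>K. (\<Sum>n\<in>N. w k n * x n)\<^sup>2) \<le> (\<Sum>k\<in>K. s * (\<Sum>n\<in>N. w k n * (x n)\<^sup>2))"
    using row by (rule sum_mono)
  also have "\<dots> = s * (\<Sum>n\<in>N. (x n)\<^sup>2 * (\<Sum>k\<in>K. w k n))"
    by (simp add: sum_distrib_left sum_distrib_right sum.swap[of _ K] mult_ac)
  also have "\<dots> \<le> s * (\<Sum>n\<in>N. (x n)\<^sup>2 * s)"
    using cols \<open>0 \<le> s\<close> by (intro mult_left_mono sum_mono) auto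
  finally show ?thesis
    by (simp add: power2_eq_square sum_distrib_left sum_distrib_right mult_ac)
qed

lemma L2_set_le_l2norm:
  assumes "f \<in> l2" "finite A"
  shows "L2_set (\<lambda>n. cmod (f n)) A \<le> l2norm f"
  using assms unfolding L2_set_def l2norm_def l2_def
  by (intro real_sqrt_le_mono sum_le_suminf) auto

lemma l2_if_L2_set_bounded:
  assumes "\<And>K. L2_set (\<lambda>n. cmod (f n)) {..<K} \<le> B"
  shows "f \<in> l2" and "l2norm f \<le> B"
proof -
  have "0 \<le> B"
    using assms[of 0] by simp
  have partial: "(\<Sum>n<K. (cmod (f n))\<^sup>2) \<le> B\<^sup>2" for K
    using assms[of K] by (simp add: L2_set_def sqrt_le_D)
  then show "f \<in> l2"
    unfolding l2_def by (intro CollectI summableI_nonneg_bounded) auto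
  then have "(\<Sum>n. (cmod (f n))\<^sup>2) \<le> B\<^sup>2"
    unfolding l2_def using partial by (intro suminf_le_const) auto
  then show "l2norm f \<le> B"
    unfolding l2norm_def using \<open>0 \<le> B\<close> by (rule real_le_lsqrt[rotated])
qed

lemma l2_add:
  assumes "f \<in> l2" "g \<in> l2"
  shows "(\<lambda>n. f n + g n) \<in> l2" and "l2norm (\<lambda>n. f n + g n) \<le> l2norm f + l2norm g"
proof -
  have "L2_set (\<lambda>n. cmod (f n + g n)) {..<K} \<le> l2norm f + l2norm g" for K
  proof -
    have "L2_set (\<lambda>n. cmod (f n + g n)) {..<K} \<le> L2_set (\<lambda>n. cmod (f n) + cmod (g n)) {..<K}"
      by (intro L2_set_mono norm_triangle_ineq) auto
    also have "\<dots> \<le> L2_set (\<lambda>n. cmod (f n)) {..<K} + L2_set (\<lambda>n. cmod (g n)) {..<K}"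
      by (rule L2_set_triangle_ineq)
    also have "\<dots> \<le> l2norm f + l2norm g"
      using assms by (intro add_mono L2_set_le_l2norm) auto
    finally show ?thesis .
  qed
  then show "(\<lambda>n. f n + g n) \<in> l2" "l2norm (\<lambda>n. f n + g n) \<le> l2norm f + l2norm g"
    by (rule l2_if_L2_set_bounded)+
qed

lemma l2_scale:
  assumes "f \<in> l2"
  shows "(\<lambda>n. c * f n) \<in> l2" and "l2norm (\<lambda>n. c * f n) = cmod c * l2norm f"
proof -
  have "(\<lambda>n. (cmod (c * f n))\<^sup>2) = (\<lambda>n. (cmod c)\<^sup>2 * (cmod (f n))\<^sup>2)"
    by (simp add: norm_mult power_mult_distrib)
  moreover have "summable (\<lambda>n. (cmod (f n))\<^sup>2)"
    using assms by (simp add: l2_def)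
  ultimately show "(\<lambda>n. c * f n) \<in> l2" "l2norm (\<lambda>n. c * f n) = cmod c * l2norm f"
    by (simp_all add: l2_def l2norm_def suminf_mult real_sqrt_mult summable_mult)
qed
section \<open>The right regular representation\<close>

lemma fusion_N_commute: "fusion_N k n m = fusion_N n k m"
  by (auto simp: fusion_N_def)

lemma fusion_N_eq_0: "k + m < n \<Longrightarrow> fusion_N k n m = 0"
  by (simp add: fusion_N_def)

lemma sum_fusion_N_le: "(\<Sum>n\<in>A. real (fusion_N k n m)) \<le> real (2*m+1)"
proof (cases "finite A")
  case True
  define W where "W = {k - m..k + m}"
  have "real (fusion_N k n m) \<le> of_bool (n \<in> W)" for n
    by (auto simp: fusion_N_def W_def)
  then have "(\<Sum>n\<in>A. real (fusion_N k n m)) \<le> (\<Sum>n\<in>A. of_bool (n \<in> W))"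
    by (rule sum_mono)
  also have "\<dots> = real (card (A \<inter> W))"
    using True by simp
  also have "card (A \<inter> W) \<le> card W"
    by (rule card_mono) (auto simp: W_def)
  then have "real (card (A \<inter> W)) \<le> real (2*m+1)"
    by (simp add: W_def)
  finally show ?thesis .
qed simp

lemma rho_eq_sum_atMost:
  assumes "k + m \<le> M"
  shows "rho m \<xi> k = (\<Sum>n\<le>M. of_nat (fusion_N k n m) * \<xi> n)"
  unfolding rho_def using assms
  by (intro sum.mono_neutral_left) (auto simp: fusion_N_eq_0)

lemma rho_bounded:
  assumes "\<xi> \<in> l2"
  shows "rho m \<xi> \<in> l2" and "l2norm (rho m \<xi>) \<le> real (2*m+1) * l2norm \<xi>"
proof -
  define w where "w k n = real (fusion_N k n m)" for k n
  have rows: "(\<Sum>n\<in>A. w k n) \<le> real (2*m+1)" for k A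
    unfolding w_def by (rule sum_fusion_N_le)
  have cols: "(\<Sum>k\<in>A. w k n) \<le> real (2*m+1)" for n A
    unfolding w_def fusion_N_commute[of _ n m] by (rule sum_fusion_N_le)
  have "L2_set (\<lambda>k. cmod (rho m \<xi> k)) {..<K} \<le> real (2*m+1) * l2norm \<xi>" for K
  proof -
    let ?N = "{..K + m}"
    have "L2_set (\<lambda>k. cmod (rho m \<xi> k)) {..<K}
        \<le> L2_set (\<lambda>k. \<Sum>n\<in>?N. w k n * cmod (\<xi> n)) {..<K}"
    proof (rule L2_set_mono)
      fix k assume "k \<in> {..<K}"
      then have "rho m \<xi> k = (\<Sum>n\<in>?N. of_nat (fusion_N k n m) * \<xi> n)"
        by (intro rho_eq_sum_atMost) simp
      then show "cmod (rho m \<xi> k) \<le> (\<Sum>n\<in>?N. w k n * cmod (\<xi> n))"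
        by (auto simp: w_def norm_mult intro: order.trans[OF norm_sum])
    qed simp
    also have "\<dots> \<le> sqrt ((real (2*m+1))\<^sup>2 * (\<Sum>n\<in>?N. (cmod (\<xi> n))\<^sup>2))"
      unfolding L2_set_def
      by (intro real_sqrt_le_mono Schur_test_sum rows cols) (simp add: w_def)
    also have "\<dots> = real (2*m+1) * L2_set (\<lambda>n. cmod (\<xi> n)) ?N"
      by (simp add: L2_set_def real_sqrt_mult)
    also have "\<dots> \<le> real (2*m+1) * l2norm \<xi>"
      using assms by (intro mult_left_mono L2_set_le_l2norm) auto
    finally show ?thesis .
  qed
  then show "rho m \<xi> \<in> l2" "l2norm (rho m \<xi>) \<le> real (2*m+1) * l2norm \<xi>"
    by (rule l2_if_L2_set_bounded)+
qed

lemma l2norm_rho_minus_ge: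
  assumes "\<xi> \<in> l2" "l2norm \<xi> = 1" "0 \<le> D"
  shows "D - real (2*m+1) \<le> l2norm (\<lambda>k. rho m \<xi> k - of_real D * \<xi> k)"
proof -
  define \<eta> where "\<eta> = (\<lambda>k. rho m \<xi> k - of_real D * \<xi> k)"
  have "(\<lambda>k. rho m \<xi> k + (- of_real D) * \<xi> k) \<in> l2"
    using assms(1) by (intro l2_add rho_bounded l2_scale)
  then have "\<eta> \<in> l2"
    by (simp add: \<eta>_def)
  have "D = l2norm (\<lambda>k. of_real D * \<xi> k)"
    using assms by (simp add: l2_scale)
  also have "(\<lambda>k. of_real D * \<xi> k) = (\<lambda>k. rho m \<xi> k + (-1) * \<eta> k)"
    by (simp add: \<eta>_def)
  also have "l2norm \<dots> \<le> l2norm (rho m \<xi>) + l2norm (\<lambda>k. (-1) * \<eta> k)"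
    using assms(1) \<open>\<eta> \<in> l2\<close> by (intro l2_add rho_bounded l2_scale)
  also have "\<dots> = l2norm (rho m \<xi>) + l2norm \<eta>"
    using l2_scale(2)[OF \<open>\<eta> \<in> l2\<close>, of "-1"] by simp
  also have "\<dots> \<le> real (2*m+1) + l2norm \<eta>"
    using rho_bounded(2)[OF assms(1), of m] assms(2) by simp
  finally show ?thesis
    by (simp add: \<eta>_def)
qed

lemma rho_1: "rho 1 \<xi> k = (if k = 0 then \<xi> 1 else \<xi> (k - 1) + \<xi> k + \<xi> (k + 1))"
proof (cases k)
  case 0
  then show ?thesis by (simp add: rho_def fusion_N_def)
next
  case (Suc j)
  have "rho 1 \<xi> k = (\<Sum>n\<in>{j, Suc j, Suc (Suc j)}. of_nat (fusion_N k n 1) * \<xi> n)"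
    unfolding rho_def by (rule sum.mono_neutral_right) (auto simp: fusion_N_def Suc)
  also have "\<dots> = \<xi> j + \<xi> (Suc j) + \<xi> (Suc (Suc j))"
    by (simp add: fusion_N_def Suc) arith
  finally show ?thesis using Suc by simp
qed

definition flat_vector :: "nat \<Rightarrow> nat \<Rightarrow> complex" where
  "flat_vector N k = (if k < N then of_real (1 / sqrt (real N)) else 0)"

lemma flat_vector_unit:
  assumes "0 < N"
  shows "flat_vector N \<in> l2" and "l2norm (flat_vector N) = 1"
proof -
  have support: "(cmod (flat_vector N k))\<^sup>2 = 0" if "k \<notin> {..<N}" for k
    using that by (simp add: flat_vector_def)
  then show "flat_vector N \<in> l2"
    unfolding l2_def by (intro CollectI summable_finite[of "{..<N}"]) auto
  have "(\<Sum>k. (cmod (flat_vector N k))\<^sup>2) = (\<Sum>k<N. (cmod (flat_vector N k))\<^sup>2)"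
    using support by (intro suminf_finite) auto
  also have "\<dots> = 1"
    using assms by (simp add: flat_vector_def norm_divide power_divide)
  finally show "l2norm (flat_vector N) = 1"
    by (simp add: l2norm_def)
qed

lemma l2norm_rho_1_minus_flat_vector:
  assumes "2 \<le> N"
  shows "l2norm (\<lambda>k. rho 1 (flat_vector N) k - of_real d * flat_vector N k)
    = sqrt ((d - 3)\<^sup>2 + (6 * d - 12) / real N)"
proof -
  obtain M where N: "N = M + 2"
    using assms by (metis le_add_diff_inverse2)
  define c where "c = 1 / sqrt (real N)"
  define g where "g k = (if k = 0 then 1 - d else if k \<le> M then 3 - d else if k = M + 1 then 2 - d
      else if k = M + 2 then 1 else 0)" for k
  have pointwise: "rho 1 (flat_vector N) k - of_real d * flat_vector N k = of_real (c * g k)" for k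
  proof -
    consider "k = 0" | "0 < k" "k \<le> M" | "k = M + 1" | "k = M + 2" | "M + 2 < k"
      by linarith
    then show ?thesis
      unfolding rho_1 by cases
        (auto simp: flat_vector_def c_def g_def N add_divide_distrib[symmetric]
          diff_divide_distrib[symmetric])
  qed
  have support: "(c * g k)\<^sup>2 = 0" if "k \<notin> {..<M + 3}" for k
    using that by (simp add: g_def)
  have sum_g: "(\<Sum>k<M + 3. (g k)\<^sup>2) = (1 - d)\<^sup>2 + real M * (3 - d)\<^sup>2 + (2 - d)\<^sup>2 + 1"
  proof -
    have "(\<Sum>k<M + 1. (g k)\<^sup>2) = (g 0)\<^sup>2 + (\<Sum>k<M. (g (Suc k))\<^sup>2)"
      using sum.lessThan_Suc_shift[of "\<lambda>k. (g k)\<^sup>2" M] by simp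
    also have "(\<Sum>k<M. (g (Suc k))\<^sup>2) = real M * (3 - d)\<^sup>2"
      by (simp add: g_def)
    finally show ?thesis
      by (simp add: numeral_3_eq_3 g_def)
  qed
  have "(\<Sum>k. (c * g k)\<^sup>2) = (\<Sum>k<M + 3. (c * g k)\<^sup>2)"
    using support by (intro suminf_finite) auto
  also have "\<dots> = c\<^sup>2 * (\<Sum>k<M + 3. (g k)\<^sup>2)"
    by (simp add: power_mult_distrib sum_distrib_left)
  also have "\<dots> = ((1 - d)\<^sup>2 + real M * (3 - d)\<^sup>2 + (2 - d)\<^sup>2 + 1) / real N"
    unfolding sum_g using assms by (simp add: c_def power_divide)
  also have "\<dots> = (d - 3)\<^sup>2 + (6 * d - 12) / real N"
    by (simp add: N field_simps power2_eq_square)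
  finally show ?thesis
    unfolding l2norm_def pointwise norm_of_real power2_abs by simp
qed

section \<open>Generating sets and the Kazhdan constant\<close>

lemma word_coeff_zeros: "set w \<subseteq> {0} \<Longrightarrow> word_coeff w k = (if k = 0 then 1 else 0)"
proof (induction w arbitrary: k)
  case Nil
  then show ?case by simp
next
  case (Cons a w)
  then have "a = 0" "set w \<subseteq> {0}"
    by auto
  then have "word_coeff (a # w) k = (\<Sum>j\<le>k. (if j = k then word_coeff w j else 0))"
    unfolding word_coeff.simps by (intro sum.cong) (auto simp: fusion_N_def)
  then show ?case
    using Cons.IH[OF \<open>set w \<subseteq> {0}\<close>] by simp
qed

lemma finite_generating_has_pos:
  assumes "finite_generating X"
  shows "\<exists>m\<in>X. 0 < m"
proof (rule ccontr)
  assume "\<not> (\<exists>m\<in>X. 0 < m)"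
  then have "X \<subseteq> {0}"
    by auto
  moreover obtain w where "set w \<subseteq> X" "word_coeff w 1 \<noteq> 0"
    using assms unfolding finite_generating_def by blast
  ultimately show False
    using word_coeff_zeros[of w 1] by auto
qed

lemma word_coeff_replicate_1: "0 < word_coeff (replicate k 1) k"
proof (induction k)
  case 0
  then show ?case by simp
next
  case (Suc k)
  have "0 < fusion_N (Suc k) 1 k * word_coeff (replicate k 1) k"
    using Suc by (simp add: fusion_N_def)
  also have "\<dots> \<le> (\<Sum>j\<le>Suc k + 1. fusion_N (Suc k) 1 j * word_coeff (replicate k 1) j)"
    by (rule member_le_sum) auto
  also have "\<dots> = word_coeff (replicate (Suc k) 1) (Suc k)"
    by (simp only: replicate_Suc word_coeff.simps)
  finally show ?case .
qed

lemma finite_generating_1: "finite_generating {1}"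
  unfolding finite_generating_def
proof (intro conjI allI)
  fix k
  show "\<exists>w. set w \<subseteq> {1} \<and> word_coeff w k \<noteq> 0"
    using word_coeff_replicate_1[of k] by (intro exI[of _ "replicate k 1"]) auto
qed simp

definition rel_displacement :: "real \<Rightarrow> (nat \<Rightarrow> complex) \<Rightarrow> nat \<Rightarrow> real" where
  "rel_displacement q \<xi> m = l2norm (\<lambda>k. rho m \<xi> k - of_real (dimq q m) * \<xi> k) / dimq q m"

lemma Kaz_X_rel_displacement:
  "Kaz_X q X = (INF \<xi>\<in>{\<xi>\<in>l2. l2norm \<xi> = 1}. Max (rel_displacement q \<xi> ` X))"
  by (simp add: Kaz_X_def rel_displacement_def)

lemma rel_displacement_ge:
  assumes "0 < q" "q \<le> 1" "1 \<le> m" "\<xi> \<in> l2" "l2norm \<xi> = 1"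
  shows "1 - 3 / dimq q 1 \<le> rel_displacement q \<xi> m"
proof -
  have "0 < dimq q m"
    using assms(1,2) by (rule dimq_pos)
  have "1 - 3 / dimq q 1 \<le> 1 - real (2*m+1) / dimq q m"
    using dimq_ratio_le[OF assms(1-3)] by simp
  also have "\<dots> = (dimq q m - real (2*m+1)) / dimq q m"
    using \<open>0 < dimq q m\<close> by (simp add: diff_divide_distrib)
  also have "\<dots> \<le> rel_displacement q \<xi> m"
    unfolding rel_displacement_def using \<open>0 < dimq q m\<close> assms(4,5)
    by (intro divide_right_mono l2norm_rho_minus_ge) auto
  finally show ?thesis .
qed

lemma Kaz_X_ge:
  assumes "0 < q" "q \<le> 1" "finite_generating X"
  shows "1 - 3 / dimq q 1 \<le> Kaz_X q X"
  unfolding Kaz_X_rel_displacement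
proof (rule cINF_greatest)
  show "{\<xi> \<in> l2. l2norm \<xi> = 1} \<noteq> {}"
    using flat_vector_unit[of 1] by auto
next
  fix \<xi> assume "\<xi> \<in> {\<xi> \<in> l2. l2norm \<xi> = 1}"
  then have "\<xi> \<in> l2" "l2norm \<xi> = 1"
    by auto
  obtain m where "m \<in> X" "0 < m"
    using finite_generating_has_pos[OF assms(3)] by blast
  then have "1 - 3 / dimq q 1 \<le> rel_displacement q \<xi> m"
    using rel_displacement_ge[OF assms(1,2) _ \<open>\<xi> \<in> l2\<close> \<open>l2norm \<xi> = 1\<close>] by simp
  also have "\<dots> \<le> Max (rel_displacement q \<xi> ` X)"
    using assms(3) \<open>m \<in> X\<close> by (simp add: finite_generating_def)
  finally show "1 - 3 / dimq q 1 \<le> Max (rel_displacement q \<xi> ` X)" .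
qed

lemma Kaz_X_1_le:
  assumes "0 < q" "q \<le> 1"
  shows "Kaz_X q {1} \<le> 1 - 3 / dimq q 1"
proof -
  define d where "d = dimq q 1"
  have "3 \<le> d"
    unfolding d_def by (rule three_le_dimq_1[OF assms(1)])
  have "bdd_below ((\<lambda>\<xi>. rel_displacement q \<xi> 1) ` {\<xi> \<in> l2. l2norm \<xi> = 1})"
    using rel_displacement_ge[OF assms] by (intro bdd_belowI) auto
  then have "Kaz_X q {1} \<le> sqrt ((d - 3)\<^sup>2 + (6 * d - 12) / real N) / d" if "2 \<le> N" for N
  proof -
    have "Kaz_X q {1} \<le> rel_displacement q (flat_vector N) 1"
      unfolding Kaz_X_rel_displacement using \<open>bdd_below _\<close> flat_vector_unit[of N] that
      by (intro cINF_lower2[of _ _ "flat_vector N"]) auto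
    also have "\<dots> = sqrt ((d - 3)\<^sup>2 + (6 * d - 12) / real N) / d"
      unfolding rel_displacement_def d_def l2norm_rho_1_minus_flat_vector[OF that] ..
    finally show ?thesis .
  qed
  moreover have "(\<lambda>N. sqrt ((d - 3)\<^sup>2 + (6 * d - 12) / real N) / d)
      \<longlonglongrightarrow> sqrt ((d - 3)\<^sup>2 + 0) / d"
    by (intro tendsto_intros lim_const_over_n) (use \<open>3 \<le> d\<close> in simp)
  ultimately have "Kaz_X q {1} \<le> sqrt ((d - 3)\<^sup>2 + 0) / d"
    by (intro LIMSEQ_le_const) auto
  also have "\<dots> = 1 - 3 / d"
    using \<open>3 \<le> d\<close> by (simp add: diff_divide_distrib)
  finally show ?thesis
    by (simp add: d_def)
qed

theorem proposition5p5:
  fixes q :: real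
  assumes "0 < q" and "q \<le> 1"
  shows "Kaz_rho q = 1 - 3 / qnum q 3
    \<and> 1 - 3 / qnum q 3 = 1 - 3 / (q\<^sup>2 + inverse (q\<^sup>2) + 1)"
proof -
  have "qnum q 3 = dimq q 1"
    by (simp add: dimq_def)
  moreover have "Kaz_rho q \<le> 1 - 3 / dimq q 1"
  proof -
    have "bdd_below (Kaz_X q ` {X. finite_generating X})"
      using Kaz_X_ge[OF assms] by (intro bdd_belowI) auto
    then have "Kaz_rho q \<le> Kaz_X q {1}"
      unfolding Kaz_rho_def using finite_generating_1 by (intro cINF_lower) auto
    then show ?thesis
      using Kaz_X_1_le[OF assms] by simp
  qed
  moreover have "1 - 3 / dimq q 1 \<le> Kaz_rho q"
    unfolding Kaz_rho_def using finite_generating_1 Kaz_X_ge[OF assms]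
    by (intro cINF_greatest) auto
  ultimately show ?thesis
    using dimq_1[OF assms(1)] by simp
qed

end
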